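(* Let $(\lambda_k)_{k\ge1}$, $(\mu_k)_{k\ge1}$ be nonzero real numbers with $|\lambda_1|>|\mu_1|>|\lambda_2|>|\mu_2|>\dots>0$ and $\lambda_k\to0$. Then $$\lim_{N\to\infty}\frac{1}{\lambda_N^2}\prod_{k=1}^\infty\frac{\lambda_N^2+\mu_k^2}{\lambda_N^2+\lambda_k^2}=\infty$$ if and only if $$\sum_{k\ge1}\Big(\frac{\mu_k^2}{\lambda_{k+1}^2}-1\Big)=\infty.$$ *)

theory Defs
  imports "HOL-Analysis.Analysis"
begin

end

theory Submission
  imports Defs
begin

(*
  With a k = lam k^2 and b k = mu k^2 we have a (k+1) < b k < a k and a k -> 0. Telescoping the
  denominators gives  prod_k (x + b k)/(x + a k) = x/(x + a 0) * Q x  with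
  Q x = prod_k (x + b k)/(x + a (k+1)),  so the quantity in the theorem is Q (a N)/(a N + a 0),
  which lies between Q (a N)/(2 a 0) and Q (a N)/a 0.  Writing r k = b k/a (k+1) - 1 >= 0, every
  factor of Q x is at most 1 + r k, and at least 1 + r k/2 when x <= a (k+1).  Hence
  Q x <= exp (sum r) uniformly in x > 0, while Q (a N) >= (sum_{k<N} r k)/2; so Q (a N) is
  unbounded exactly when the partial sums of r are.
*)

lemma incseq_filterlim_at_top_iff:
  fixes f :: "nat \<Rightarrow> 'a::linorder"
  assumes "incseq f"
  shows "filterlim f at_top sequentially \<longleftrightarrow> (\<forall>Z. \<exists>n. Z \<le> f n)"
  using assms unfolding filterlim_at_top eventually_sequentially incseq_def
  by (meson order.refl order.trans)

lemma telescope_has_prod: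
  fixes g :: "nat \<Rightarrow> 'a::real_normed_field"
  assumes nz: "\<And>k. g k \<noteq> 0" and lim: "g \<longlonglongrightarrow> L" and "L \<noteq> 0"
  shows "(\<lambda>k. g (Suc k) / g k) has_prod (L / g 0)"
proof -
  have "(\<Prod>k\<le>n. g (Suc k) / g k) = g (Suc n) / g 0" for n
    using prod_lessThan_telescope[of "Suc n" g] nz by (simp add: lessThan_Suc_atMost)
  moreover have "(\<lambda>n. g (Suc n) / g 0) \<longlonglongrightarrow> L / g 0"
    using LIMSEQ_Suc[OF lim] by (intro tendsto_divide tendsto_const) (use nz in auto)
  ultimately show ?thesis
    using \<open>L \<noteq> 0\<close> nz by (simp add: has_prod_def raw_has_prod_def)
qed

lemma convergent_prod_ratio:
  fixes x :: real and b c :: "nat \<Rightarrow> real"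
  assumes "x > 0" and c_nonneg: "\<And>k. c k \<ge> 0" and "summable (\<lambda>k. \<bar>b k - c k\<bar>)"
  shows "convergent_prod (\<lambda>k. (x + b k) / (x + c k))"
proof -
  have "norm ((x + b k) / (x + c k) - 1) \<le> \<bar>b k - c k\<bar> / x" for k
  proof -
    have "x + c k \<ge> x" using c_nonneg[of k] by simp
    then have "\<bar>b k - c k\<bar> / (x + c k) \<le> \<bar>b k - c k\<bar> / x"
      using \<open>x > 0\<close> by (intro divide_left_mono) auto
    moreover have "(x + b k) / (x + c k) - 1 = (b k - c k) / (x + c k)"
      using \<open>x + c k \<ge> x\<close> \<open>x > 0\<close> by (simp add: field_simps)
    ultimately show ?thesis using \<open>x + c k \<ge> x\<close> \<open>x > 0\<close> by simp
  qed
  then have "summable (\<lambda>k. norm ((x + b k) / (x + c k) - 1))"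
    by (intro summable_comparison_test'[OF summable_divide[OF assms(3), of x]]) auto
  then show ?thesis
    by (intro abs_convergent_prod_imp_convergent_prod summable_imp_abs_convergent_prod)
qed

lemma ratio_add_le_ratio:
  fixes x c d :: real
  assumes "0 \<le> x" "0 < c" "c \<le> d"
  shows "(x + d) / (x + c) \<le> d / c"
  using assms mult_right_mono[of c d x] by (simp add: field_simps)

lemma half_excess_le_ratio_add:
  fixes x c d :: real
  assumes "0 \<le> x" "x \<le> c" "0 < c" "c \<le> d"
  shows "1 + (d / c - 1) / 2 \<le> (x + d) / (x + c)"
proof -
  have "(c + d) * (x + c) \<le> (x + d) * (2 * c)"
    using mult_nonneg_nonneg[of "c - x" "d - c"] assms by (simp add: algebra_simps)
  then show ?thesis
    using assms by (simp add: field_simps)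
qed

locale interlacing =
  fixes a b :: "nat \<Rightarrow> real"
  assumes a_pos: "\<And>k. a k > 0"
    and b_less: "\<And>k. b k < a k"
    and b_greater: "\<And>k. a (Suc k) < b k"
    and a_tendsto_zero: "a \<longlonglongrightarrow> 0"
begin

definition excess_sum :: "nat \<Rightarrow> real"
  where "excess_sum n = (\<Sum>k<n. b k / a (Suc k) - 1)"

definition shifted_prod :: "real \<Rightarrow> real"
  where "shifted_prod x = (\<Prod>k. (x + b k) / (x + a (Suc k)))"

lemma decseq_a: "decseq a"
  using b_less b_greater by (intro decseq_SucI) (meson less_imp_le order.strict_trans)

lemma b_pos: "b k > 0"
  using a_pos[of "Suc k"] b_greater[of k] by simp

lemma excess_nonneg: "b k / a (Suc k) - 1 \<ge> 0"
  using a_pos[of "Suc k"] b_greater[of k] by simp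

lemma incseq_excess_sum: "incseq excess_sum"
  unfolding excess_sum_def using excess_nonneg by (intro incseq_SucI) simp

lemma excess_sum_nonneg: "excess_sum n \<ge> 0"
  unfolding excess_sum_def using excess_nonneg by (intro sum_nonneg)

lemma convergent_shifted_factors:
  assumes "x > 0"
  shows "convergent_prod (\<lambda>k. (x + b k) / (x + a (Suc k)))"
proof (rule convergent_prod_ratio[OF assms])
  show "a (Suc k) \<ge> 0" for k using a_pos[of "Suc k"] by simp
  have "\<bar>b k - a (Suc k)\<bar> \<le> a k - a (Suc k)" for k
    using b_less[of k] b_greater[of k] by simp
  then show "summable (\<lambda>k. \<bar>b k - a (Suc k)\<bar>)"
    by (intro summable_comparison_test'[OF telescope_summable'[OF a_tendsto_zero]]) auto
qed

lemma prodinf_eq_shifted_prod: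
  assumes "x > 0"
  shows "(\<Prod>k. (x + b k) / (x + a k)) = x / (x + a 0) * shifted_prod x"
proof -
  have nz: "x + a k \<noteq> 0" for k using a_pos[of k] assms by simp
  have "(\<lambda>k. (x + a (Suc k)) / (x + a k)) has_prod (x / (x + a 0))"
    using telescope_has_prod[of "\<lambda>k. x + a k" x] nz assms
      tendsto_add[OF tendsto_const a_tendsto_zero, of x] by simp
  moreover have "(\<lambda>k. (x + b k) / (x + a (Suc k))) has_prod shifted_prod x"
    unfolding shifted_prod_def using convergent_shifted_factors[OF assms] ..
  ultimately have "(\<lambda>k. (x + a (Suc k)) / (x + a k) * ((x + b k) / (x + a (Suc k))))
      has_prod (x / (x + a 0) * shifted_prod x)"
    by (rule has_prod_mult)
  moreover have "(\<lambda>k. (x + a (Suc k)) / (x + a k) * ((x + b k) / (x + a (Suc k))))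
      = (\<lambda>k. (x + b k) / (x + a k))"
    using nz by (simp add: fun_eq_iff)
  ultimately show ?thesis
    by (metis has_prod_unique)
qed

lemma shifted_prod_le_exp:
  assumes "x > 0" and bound: "\<And>n. excess_sum n \<le> Z"
  shows "shifted_prod x \<le> exp Z"
  unfolding shifted_prod_def
proof (rule prodinf_le_const[OF convergent_shifted_factors[OF assms(1)]])
  fix n
  have "(\<Prod>k<n. (x + b k) / (x + a (Suc k))) \<le> (\<Prod>k<n. 1 + (b k / a (Suc k) - 1))"
    using assms(1) a_pos b_pos b_greater
    by (intro prod_mono conjI ratio_add_le_ratio[THEN order.trans] divide_nonneg_pos)
       (auto intro: less_imp_le add_pos_pos)
  also have "\<dots> \<le> exp (excess_sum n)"
    unfolding excess_sum_def using excess_nonneg by (rule prod_le_exp_sum)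
  also have "\<dots> \<le> exp Z" using bound by simp
  finally show "(\<Prod>k<n. (x + b k) / (x + a (Suc k))) \<le> exp Z" .
qed

lemma half_excess_sum_le_shifted_prod: "excess_sum N / 2 \<le> shifted_prod (a N)"
proof -
  have factor_ge_one: "1 \<le> (a N + b k) / (a N + a (Suc k))" for k
    using a_pos[of N] a_pos[of "Suc k"] b_greater[of k] by simp
  have "excess_sum N / 2 = (\<Sum>k<N. (b k / a (Suc k) - 1) / 2)"
    unfolding excess_sum_def by (simp add: sum_divide_distrib)
  also have "\<dots> \<le> (\<Prod>k<N. 1 + (b k / a (Suc k) - 1) / 2)"
    using excess_nonneg by (intro sum_le_prod) simp
  also have "\<dots> \<le> (\<Prod>k<N. (a N + b k) / (a N + a (Suc k)))"
  proof (intro prod_mono conjI half_excess_le_ratio_add)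
    fix k assume "k \<in> {..<N}"
    then show "a N \<le> a (Suc k)" using decseq_a by (simp add: decseqD)
  qed (use a_pos b_greater excess_nonneg in \<open>auto intro: less_imp_le\<close>)
  also have "\<dots> \<le> shifted_prod (a N)"
    unfolding shifted_prod_def
    using convergent_shifted_factors[OF a_pos] factor_ge_one
    by (intro prod_le_prodinf) (auto intro: order.trans[OF zero_le_one])
  finally show ?thesis .
qed

lemma scaled_prodinf_eq:
  "1 / a N * (\<Prod>k. (a N + b k) / (a N + a k)) = shifted_prod (a N) / (a N + a 0)"
  using prodinf_eq_shifted_prod[OF a_pos] a_pos[of N] by simp

theorem scaled_prodinf_at_top_iff:
  "filterlim (\<lambda>N. 1 / a N * (\<Prod>k. (a N + b k) / (a N + a k))) at_top sequentially
     \<longleftrightarrow> filterlim excess_sum at_top sequentially"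
  unfolding scaled_prodinf_eq
proof
  assume lim: "filterlim (\<lambda>N. shifted_prod (a N) / (a N + a 0)) at_top sequentially"
  show "filterlim excess_sum at_top sequentially"
    unfolding incseq_filterlim_at_top_iff[OF incseq_excess_sum]
  proof (rule allI, rule ccontr)
    fix Z assume "\<not> (\<exists>n. Z \<le> excess_sum n)"
    then have "excess_sum n \<le> Z" for n by (meson linear)
    then have bounded: "shifted_prod (a N) / (a N + a 0) \<le> exp Z / a 0" for N
      using shifted_prod_le_exp[OF a_pos] a_pos[of N] a_pos[of 0] by (intro frac_le) auto
    obtain N where "exp Z / a 0 < shifted_prod (a N) / (a N + a 0)"
      using lim unfolding filterlim_at_top_dense eventually_sequentially by blast
    with bounded show False by (meson not_le)
  qed
next
  assume "filterlim excess_sum at_top sequentially"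
  then have "filterlim (\<lambda>N. inverse (4 * a 0) * excess_sum N) at_top sequentially"
    using a_pos[of 0] by (intro filterlim_tendsto_pos_mult_at_top[OF tendsto_const]) auto
  moreover have "inverse (4 * a 0) * excess_sum N \<le> shifted_prod (a N) / (a N + a 0)" for N
  proof -
    have "inverse (4 * a 0) * excess_sum N = (excess_sum N / 2) / (2 * a 0)"
      by (simp add: field_simps)
    also have "\<dots> \<le> shifted_prod (a N) / (a N + a 0)"
      using half_excess_sum_le_shifted_prod[of N] excess_sum_nonneg[of N] a_pos[of N]
        decseqD[OF decseq_a, of 0 N]
      by (intro frac_le) auto
    finally show ?thesis .
  qed
  ultimately show "filterlim (\<lambda>N. shifted_prod (a N) / (a N + a 0)) at_top sequentially"
    by (rule filterlim_at_top_mono[OF _ always_eventually[OF allI]])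
qed

end

theorem lemma4p8:
  fixes lam mu :: "nat \<Rightarrow> real"
  assumes nz: "\<And>k. lam k \<noteq> 0" "\<And>k. mu k \<noteq> 0"
    and interlace: "\<And>k. \<bar>lam k\<bar> > \<bar>mu k\<bar> \<and> \<bar>mu k\<bar> > \<bar>lam (Suc k)\<bar>"
    and lim0: "lam \<longlonglongrightarrow> 0"
  shows "filterlim (\<lambda>N. (1 / (lam N)^2) *
            (\<Prod>k. ((lam N)^2 + (mu k)^2) / ((lam N)^2 + (lam k)^2))) at_top sequentially
     \<longleftrightarrow> filterlim (\<lambda>n. \<Sum>k<n. (mu k)^2 / (lam (Suc k))^2 - 1) at_top sequentially"
proof -
  have square_less: "x\<^sup>2 < y\<^sup>2" if "\<bar>x\<bar> < \<bar>y\<bar>" for x y :: real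
    using that by (simp add: abs_le_square_iff less_le_not_le)
  interpret interlacing "\<lambda>k. (lam k)\<^sup>2" "\<lambda>k. (mu k)\<^sup>2"
  proof
    show "(\<lambda>k. (lam k)\<^sup>2) \<longlonglongrightarrow> 0"
      using tendsto_power[OF lim0, of 2] by simp
  qed (use nz interlace square_less in auto)
  show ?thesis
    using scaled_prodinf_at_top_iff unfolding excess_sum_def .
qed

end
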